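(* Let $\mathcal{H}=(V,E)$ be a hypergraph, and consider the mixed integer linear program with variables $w_R\in[0,1]$ for each $R\in E$ and $t_x\in\{0,1\}$ for each $x\in V$: maximize $\sum_{R\in E}w_R$ subject to (a) for all $x\in V$: $\sum_{R\in E: x\in R}w_R\le t_x+(1-t_x)L$; (b) for all $R\in E$: $w_R\le\sum_{x\in R}t_x$; (c) for all $U,W\in E$ and all $y\in U\setminus W$: $w_W\le 1+\sum_{x\in W\setminus U}t_x-t_y$. Then the optimal objective value of this program is $\kappa(\mathcal{H})$.
   Context: $L$ is a fixed large number (large enough that constraint (a) is vacuous when $t_x=0$, e.g. $L\ge|E|$). $\mathcal{H}[S]$ is the hypergraph with vertex set $S$ and edges $\{S\cap e: e\in E, S\cap e\ne\emptyset\}$; $\mathsf{red}$ removes every edge $e$ contained in another edge $e'\ne e$. $\tau^*$ is the value of a maximum fractional edge packing (equivalently, minimum fractional vertex cover). $\kappa(\mathcal{H})=\max_{S\subseteq V}\tau^*(\mathsf{red}(\mathcal{H}[S]))$. *)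

theory Defs
  imports Main "HOL.Real"
begin

definition hypergraph :: "'a set \<Rightarrow> 'a set set \<Rightarrow> bool" where
  "hypergraph V E \<longleftrightarrow> finite V \<and> E \<subseteq> Pow V"

definition induced_edges :: "'a set set \<Rightarrow> 'a set \<Rightarrow> 'a set set" where
  "induced_edges E S = {S \<inter> e | e. e \<in> E \<and> S \<inter> e \<noteq> {}}"

definition red_edges :: "'a set set \<Rightarrow> 'a set set" where
  "red_edges F = {e \<in> F. \<not> (\<exists>e'\<in>F. e' \<noteq> e \<and> e \<subseteq> e')}"

definition frac_edge_packing :: "'a set \<Rightarrow> 'a set set \<Rightarrow> ('a set \<Rightarrow> real) \<Rightarrow> bool" where
  "frac_edge_packing V F w \<longleftrightarrow>
     (\<forall>e\<in>F. 0 \<le> w e) \<and> (\<forall>v\<in>V. (\<Sum>e\<in>{e\<in>F. v \<in> e}. w e) \<le> 1)"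

definition tau_star :: "'a set \<Rightarrow> 'a set set \<Rightarrow> real" where
  "tau_star V F = Sup {(\<Sum>e\<in>F. w e) | w. frac_edge_packing V F w}"

definition kappa :: "'a set \<Rightarrow> 'a set set \<Rightarrow> real" where
  "kappa V E = Max {tau_star S (red_edges (induced_edges E S)) | S. S \<subseteq> V}"

definition milp_feasible ::
  "real \<Rightarrow> 'a set \<Rightarrow> 'a set set \<Rightarrow> ('a set \<Rightarrow> real) \<Rightarrow> ('a \<Rightarrow> real) \<Rightarrow> bool" where
  "milp_feasible L V E w t \<longleftrightarrow>
     (\<forall>R\<in>E. 0 \<le> w R \<and> w R \<le> 1) \<and>
     (\<forall>x\<in>V. t x \<in> {0, 1}) \<and>
     (\<forall>x\<in>V. (\<Sum>R\<in>{R\<in>E. x \<in> R}. w R) \<le> t x + (1 - t x) * L) \<and>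
     (\<forall>R\<in>E. w R \<le> (\<Sum>x\<in>R. t x)) \<and>
     (\<forall>U\<in>E. \<forall>W\<in>E. \<forall>y\<in>U - W. w W \<le> 1 + (\<Sum>x\<in>W - U. t x) - t y)"

end

theory Submission
  imports Defs "HOL-Analysis.Function_Topology"
begin

text \<open>Given a feasible solution \<open>(w, t)\<close>, let \<open>S\<close> be the set of vertices with \<open>t\<^sub>x = 1\<close>.
  Constraint (b) forces \<open>w\<^sub>R = 0\<close> for every edge missing \<open>S\<close>, and constraint (c) forces
  \<open>w\<^sub>R = 0\<close> for every edge whose trace \<open>R \<inter> S\<close> lies strictly inside another trace. Summing the
  remaining weights over edges with equal trace gives, by (a), a fractional edge packing of
  \<open>red(H[S])\<close>; hence the objective is at most \<open>\<tau>\<^sup>*(red(H[S])) \<le> \<kappa>(H)\<close>.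
  Conversely, take \<open>S\<close> attaining \<open>\<kappa>(H)\<close>, an optimal packing of \<open>red(H[S])\<close> spread evenly over the
  edges with each trace, and \<open>t\<close> the indicator of \<open>S\<close>. Constraint (c) holds because the traces in
  \<open>red(H[S])\<close> are maximal, and (a) holds outside \<open>S\<close> because \<open>L \<ge> |E|\<close>.\<close>

lemma frac_edge_packing_bounds:
  assumes "frac_edge_packing V F w" "finite F" "e \<in> F" "e \<inter> V \<noteq> {}"
  shows "0 \<le> w e \<and> w e \<le> 1"
proof -
  obtain v where v: "v \<in> e" "v \<in> V"
    using assms(4) by blast
  have "w e \<le> (\<Sum>e\<in>{e\<in>F. v \<in> e}. w e)"
    by (rule member_le_sum) (use assms v in \<open>auto simp: frac_edge_packing_def\<close>)
  also have "\<dots> \<le> 1"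
    using assms(1) v by (auto simp: frac_edge_packing_def)
  finally show ?thesis
    using assms(1,3) by (simp add: frac_edge_packing_def)
qed

lemma compact_bounded_frac_edge_packings:
  "compact (Pi\<^sub>E UNIV (\<lambda>e. if e \<in> F then {0..1::real} else {0})
     \<inter> (\<Inter>v\<in>V. {w. (\<Sum>e\<in>{e\<in>F. v \<in> e}. w e) \<le> 1}))"
proof (rule compact_Int_closed)
  have "compactin (product_topology (\<lambda>_. euclidean) UNIV)
      (Pi\<^sub>E UNIV (\<lambda>e. if e \<in> F then {0..1::real} else {0}))"
    by (subst compactin_PiE) auto
  then show "compact (Pi\<^sub>E UNIV (\<lambda>e. if e \<in> F then {0..1::real} else {0}))"
    by (simp add: euclidean_product_topology)
  show "closed (\<Inter>v\<in>V. {w. (\<Sum>e\<in>{e\<in>F. v \<in> e}. w e) \<le> (1::real)})"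
    by (intro closed_INT ballI closed_Collect_le continuous_on_sum continuous_on_const
        continuous_on_product_coordinates)
qed

lemma frac_edge_packing_max_exists:
  assumes "finite F" "\<forall>e\<in>F. e \<inter> V \<noteq> {}"
  obtains w where "frac_edge_packing V F w"
    "\<And>w'. frac_edge_packing V F w' \<Longrightarrow> (\<Sum>e\<in>F. w' e) \<le> (\<Sum>e\<in>F. w e)"
proof -
  define box where "box = Pi\<^sub>E UNIV (\<lambda>e. if e \<in> F then {0..1::real} else {0})"
  define K where "K = box \<inter> (\<Inter>v\<in>V. {w. (\<Sum>e\<in>{e\<in>F. v \<in> e}. w e) \<le> 1})"
  have "compact K"
    unfolding K_def box_def by (rule compact_bounded_frac_edge_packings)
  moreover have "(\<lambda>_. 0) \<in> K"
    by (auto simp: K_def box_def)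
  moreover have "continuous_on K (\<lambda>w. \<Sum>e\<in>F. w e)"
    by (intro continuous_on_sum continuous_on_subset[OF continuous_on_product_coordinates]) auto
  ultimately have "\<exists>w\<in>K. \<forall>w'\<in>K. (\<Sum>e\<in>F. w' e) \<le> (\<Sum>e\<in>F. w e)"
    by (intro continuous_attains_sup) auto
  then obtain w where w: "w \<in> K" "\<And>w'. w' \<in> K \<Longrightarrow> (\<Sum>e\<in>F. w' e) \<le> (\<Sum>e\<in>F. w e)"
    by blast
  show thesis
  proof (rule that)
    show "frac_edge_packing V F w"
      using w(1) unfolding K_def box_def frac_edge_packing_def PiE_UNIV_domain
      by (auto simp: Pi_iff split: if_splits)
  next
    fix w' assume w': "frac_edge_packing V F w'"
    define w'' where "w'' e = (if e \<in> F then w' e else 0)" for e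
    have "w'' \<in> box"
      using frac_edge_packing_bounds[OF w' assms(1)] assms(2)
      by (auto simp: box_def PiE_UNIV_domain w''_def)
    moreover have "(\<Sum>e\<in>{e\<in>F. v \<in> e}. w'' e) = (\<Sum>e\<in>{e\<in>F. v \<in> e}. w' e)" for v
      by (simp add: w''_def)
    ultimately have "w'' \<in> K"
      using w' by (simp add: K_def frac_edge_packing_def)
    moreover have "(\<Sum>e\<in>F. w'' e) = (\<Sum>e\<in>F. w' e)"
      by (simp add: w''_def)
    ultimately show "(\<Sum>e\<in>F. w' e) \<le> (\<Sum>e\<in>F. w e)"
      using w(2) by metis
  qed
qed

lemma tau_star_eq_max_packing:
  assumes "frac_edge_packing V F w"
    and "\<And>w'. frac_edge_packing V F w' \<Longrightarrow> (\<Sum>e\<in>F. w' e) \<le> (\<Sum>e\<in>F. w e)"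
  shows "tau_star V F = (\<Sum>e\<in>F. w e)"
  unfolding tau_star_def by (rule cSup_eq_maximum) (use assms in auto)

lemma tau_star_attained:
  assumes "finite F" "\<forall>e\<in>F. e \<inter> V \<noteq> {}"
  obtains w where "frac_edge_packing V F w" "tau_star V F = (\<Sum>e\<in>F. w e)"
proof -
  obtain w where w: "frac_edge_packing V F w"
    and max: "\<And>w'. frac_edge_packing V F w' \<Longrightarrow> (\<Sum>e\<in>F. w' e) \<le> (\<Sum>e\<in>F. w e)"
    using frac_edge_packing_max_exists[OF assms] by blast
  show thesis
    using that[OF w tau_star_eq_max_packing[OF w max]] .
qed

lemma sum_le_tau_star:
  assumes "finite F" "\<forall>e\<in>F. e \<inter> V \<noteq> {}" "frac_edge_packing V F w"
  shows "(\<Sum>e\<in>F. w e) \<le> tau_star V F"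
proof -
  obtain w' where w': "frac_edge_packing V F w'"
    and max: "\<And>w. frac_edge_packing V F w \<Longrightarrow> (\<Sum>e\<in>F. w e) \<le> (\<Sum>e\<in>F. w' e)"
    using frac_edge_packing_max_exists[OF assms(1,2)] by blast
  show ?thesis
    using max[OF assms(3)] tau_star_eq_max_packing[OF w' max] by simp
qed

lemma finite_induced_edges: "finite E \<Longrightarrow> finite (induced_edges E S)"
proof -
  have "induced_edges E S = (\<lambda>e. S \<inter> e) ` {e\<in>E. S \<inter> e \<noteq> {}}"
    unfolding induced_edges_def by auto
  then show "finite E \<Longrightarrow> finite (induced_edges E S)"
    by simp
qed

lemma finite_red_edges: "finite F \<Longrightarrow> finite (red_edges F)"
  unfolding red_edges_def by simp

lemma red_edges_subset: "red_edges F \<subseteq> F"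
  unfolding red_edges_def by blast

lemma red_induced_edges_nonempty_subset:
  "e \<in> red_edges (induced_edges E S) \<Longrightarrow> e \<noteq> {} \<and> e \<subseteq> S"
  unfolding red_edges_def induced_edges_def by auto

lemma trace_in_red_induced_edges_iff:
  "R \<inter> S \<in> red_edges (induced_edges E S) \<longleftrightarrow>
     R \<inter> S \<in> induced_edges E S \<and> (\<forall>U\<in>E. R \<inter> S \<subseteq> U \<longrightarrow> S \<inter> U \<subseteq> R)"
  unfolding red_edges_def induced_edges_def by auto

lemma tau_star_le_kappa:
  assumes "finite V" "S \<subseteq> V"
  shows "tau_star S (red_edges (induced_edges E S)) \<le> kappa V E"
  unfolding kappa_def
  by (rule Max_ge) (use assms in \<open>auto simp: setcompr_eq_image\<close>)

lemma kappa_attained: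
  assumes "finite V"
  obtains S where "S \<subseteq> V" "kappa V E = tau_star S (red_edges (induced_edges E S))"
proof -
  have "kappa V E \<in> {tau_star S (red_edges (induced_edges E S)) | S. S \<subseteq> V}"
    unfolding kappa_def by (rule Max_in) (use assms in \<open>auto simp: setcompr_eq_image\<close>)
  then show thesis
    using that by blast
qed

lemma sum_zero_one_eq_card:
  assumes "finite A" "\<forall>x\<in>A. t x \<in> {0, 1}"
  shows "(\<Sum>x\<in>A. t x) = real (card {x\<in>A. t x = 1})"
proof -
  have "(\<Sum>x\<in>A. t x) = (\<Sum>x\<in>A. if t x = 1 then 1 else 0)"
    using assms(2) by (intro sum.cong) auto
  then show ?thesis
    using assms(1) by (simp add: sum.inter_filter[symmetric])
qed

lemma sum_fibres:
  assumes "finite A" "finite B"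
  shows "(\<Sum>y\<in>B. \<Sum>x\<in>{x\<in>A. g x = y}. h x) = (\<Sum>x\<in>{x\<in>A. g x \<in> B}. h x)"
proof -
  have "(\<Sum>y\<in>B. \<Sum>x\<in>{x\<in>A. g x = y}. h x) = (\<Sum>y\<in>B. \<Sum>x\<in>{x. x \<in> {x\<in>A. g x \<in> B} \<and> g x = y}. h x)"
    by (intro sum.cong) auto
  also have "\<dots> = (\<Sum>x\<in>{x\<in>A. g x \<in> B}. h x)"
    by (rule sum.group) (use assms in auto)
  finally show ?thesis .
qed

lemma frac_edge_packing_traces:
  assumes "finite E" "finite F" "\<forall>R\<in>E. 0 \<le> w R" "\<forall>v\<in>S. (\<Sum>R\<in>{R\<in>E. v \<in> R}. w R) \<le> 1"
  shows "frac_edge_packing S F (\<lambda>f. \<Sum>R\<in>{R\<in>E. R \<inter> S = f}. w R)"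
  unfolding frac_edge_packing_def
proof (intro conjI ballI)
  fix f
  show "0 \<le> (\<Sum>R\<in>{R\<in>E. R \<inter> S = f}. w R)"
    using assms(3) by (intro sum_nonneg) auto
next
  fix v assume v: "v \<in> S"
  have "(\<Sum>f\<in>{f\<in>F. v \<in> f}. \<Sum>R\<in>{R\<in>E. R \<inter> S = f}. w R)
      = (\<Sum>R\<in>{R\<in>E. R \<inter> S \<in> {f\<in>F. v \<in> f}}. w R)"
    by (rule sum_fibres) (use assms in auto)
  also have "\<dots> \<le> (\<Sum>R\<in>{R\<in>E. v \<in> R}. w R)"
    by (rule sum_mono2) (use assms in auto)
  also have "\<dots> \<le> 1"
    using assms(4) v by blast
  finally show "(\<Sum>f\<in>{f\<in>F. v \<in> f}. \<Sum>R\<in>{R\<in>E. R \<inter> S = f}. w R) \<le> 1" .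
qed

lemma milp_feasible_weight_vanishes:
  assumes "hypergraph V E" "milp_feasible L V E w t" "R \<in> E"
    and "R \<inter> {x\<in>V. t x = 1} \<notin> red_edges (induced_edges E {x\<in>V. t x = 1})"
  shows "w R = 0"
proof -
  define S where "S = {x\<in>V. t x = 1}"
  have R: "finite R" "R \<subseteq> V"
    using assms(1,3) by (auto simp: hypergraph_def intro: finite_subset)
  have w_nonneg: "0 \<le> w R"
    and cover: "w R \<le> (\<Sum>x\<in>R. t x)"
    and domination: "\<And>U y. U \<in> E \<Longrightarrow> y \<in> U - R \<Longrightarrow> w R \<le> 1 + (\<Sum>x\<in>R - U. t x) - t y"
    using assms(2,3) unfolding milp_feasible_def by auto
  have sum_t: "(\<Sum>x\<in>A. t x) = real (card (A \<inter> S))" if "A \<subseteq> R" for A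
  proof -
    have "(\<Sum>x\<in>A. t x) = real (card {x\<in>A. t x = 1})"
      using that R assms(2) by (intro sum_zero_one_eq_card) (auto simp: milp_feasible_def intro: finite_subset)
    also have "{x\<in>A. t x = 1} = A \<inter> S"
      using that R by (auto simp: S_def)
    finally show ?thesis .
  qed
  have "w R \<le> 0"
  proof (cases "R \<inter> S = {}")
    case True
    then show ?thesis
      using cover sum_t[of R] by simp
  next
    case False
    then have "R \<inter> S \<in> induced_edges E S"
      using assms(3) by (auto simp: induced_edges_def)
    moreover have "R \<inter> S \<notin> red_edges (induced_edges E S)"
      using assms(4) by (simp add: S_def)
    ultimately obtain U where U: "U \<in> E" "R \<inter> S \<subseteq> U" "\<not> S \<inter> U \<subseteq> R"
      using trace_in_red_induced_edges_iff[of R S E] by auto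
    then obtain y where y: "y \<in> S" "y \<in> U - R"
      by auto
    have "(R - U) \<inter> S = {}"
      using U(2) by auto
    then have "(\<Sum>x\<in>R - U. t x) = 0"
      using sum_t[of "R - U"] by simp
    moreover have "t y = 1"
      using y(1) by (simp add: S_def)
    ultimately show ?thesis
      using domination[OF U(1) y(2)] by simp
  qed
  then show ?thesis
    using w_nonneg by simp
qed

lemma milp_value_le_kappa:
  assumes "hypergraph V E" "milp_feasible L V E w t"
  shows "(\<Sum>R\<in>E. w R) \<le> kappa V E"
proof -
  define S where "S = {x\<in>V. t x = 1}"
  define F where "F = red_edges (induced_edges E S)"
  have fin: "finite V" "finite E" "finite F"
    using assms(1) by (auto simp: hypergraph_def F_def finite_subset finite_red_edges finite_induced_edges)
  have "(\<Sum>R\<in>E. w R) = (\<Sum>R\<in>{R\<in>E. R \<inter> S \<in> F}. w R)"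
    using milp_feasible_weight_vanishes[OF assms] fin
    by (intro sum.mono_neutral_right) (auto simp: S_def F_def)
  also have "\<dots> = (\<Sum>f\<in>F. \<Sum>R\<in>{R\<in>E. R \<inter> S = f}. w R)"
    using fin by (intro sum_fibres[symmetric]) auto
  also have "\<dots> \<le> tau_star S F"
  proof (rule sum_le_tau_star)
    show "\<forall>e\<in>F. e \<inter> S \<noteq> {}"
      using red_induced_edges_nonempty_subset unfolding F_def by blast
    show "frac_edge_packing S F (\<lambda>f. \<Sum>R\<in>{R\<in>E. R \<inter> S = f}. w R)"
      using assms(2) fin by (intro frac_edge_packing_traces) (auto simp: milp_feasible_def S_def)
  qed (use fin in simp)
  also have "\<dots> \<le> kappa V E"
    unfolding F_def using fin by (intro tau_star_le_kappa) (auto simp: S_def)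
  finally show ?thesis .
qed

definition spread_weights ::
  "'a set set \<Rightarrow> 'a set \<Rightarrow> 'a set set \<Rightarrow> ('a set \<Rightarrow> real) \<Rightarrow> 'a set \<Rightarrow> real" where
  "spread_weights E S F p R =
     (if R \<inter> S \<in> F then p (R \<inter> S) / card {R'\<in>E. R' \<inter> S = R \<inter> S} else 0)"

lemma sum_spread_weights:
  assumes "finite E" "finite F" "F \<subseteq> induced_edges E S"
  shows "(\<Sum>R\<in>{R\<in>E. P (R \<inter> S)}. spread_weights E S F p R) = (\<Sum>f\<in>{f\<in>F. P f}. p f)"
proof -
  have fibre: "(\<Sum>R\<in>{R\<in>E. R \<inter> S = f}. spread_weights E S F p R) = p f" if "f \<in> F" for f
  proof -
    have "{R\<in>E. R \<inter> S = f} \<noteq> {}"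
      using that assms(3) by (auto simp: induced_edges_def)
    then have "card {R\<in>E. R \<inter> S = f} \<noteq> 0"
      using assms(1) by simp
    moreover have "(\<Sum>R\<in>{R\<in>E. R \<inter> S = f}. spread_weights E S F p R)
        = (\<Sum>R\<in>{R\<in>E. R \<inter> S = f}. p f / card {R\<in>E. R \<inter> S = f})"
      using that by (intro sum.cong) (auto simp: spread_weights_def)
    ultimately show ?thesis
      by simp
  qed
  have "(\<Sum>R\<in>{R\<in>E. P (R \<inter> S)}. spread_weights E S F p R)
      = (\<Sum>R\<in>{R\<in>E. R \<inter> S \<in> {f\<in>F. P f}}. spread_weights E S F p R)"
    using assms(1) by (intro sum.mono_neutral_right) (auto simp: spread_weights_def)
  also have "\<dots> = (\<Sum>f\<in>{f\<in>F. P f}. \<Sum>R\<in>{R\<in>E. R \<inter> S = f}. spread_weights E S F p R)"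
    using assms by (intro sum_fibres[symmetric]) auto
  also have "\<dots> = (\<Sum>f\<in>{f\<in>F. P f}. p f)"
    using fibre by simp
  finally show ?thesis .
qed

lemma spread_weights_load_le_one:
  assumes "finite E" "finite F" "F \<subseteq> induced_edges E S" "frac_edge_packing S F p" "x \<in> S"
  shows "(\<Sum>R\<in>{R\<in>E. x \<in> R}. spread_weights E S F p R) \<le> 1"
proof -
  have "(\<Sum>R\<in>{R\<in>E. x \<in> R}. spread_weights E S F p R) = (\<Sum>f\<in>{f\<in>F. x \<in> f}. p f)"
    using sum_spread_weights[OF assms(1-3), where P = "\<lambda>f. x \<in> f" and p = p] assms(5) by simp
  also have "\<dots> \<le> 1"
    using assms(4,5) by (simp add: frac_edge_packing_def)
  finally show ?thesis .
qed

lemma spread_weights_bounds: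
  assumes "finite E" "R \<in> E" "\<forall>f\<in>F. 0 \<le> p f \<and> p f \<le> 1"
  shows "0 \<le> spread_weights E S F p R \<and> spread_weights E S F p R \<le> 1"
proof -
  have "{R'\<in>E. R' \<inter> S = R \<inter> S} \<noteq> {}"
    using assms(2) by auto
  then have "0 < card {R'\<in>E. R' \<inter> S = R \<inter> S}"
    using assms(1) by (simp add: card_gt_0_iff)
  then show ?thesis
    using assms(3) by (auto simp: spread_weights_def divide_le_eq)
qed

lemma one_le_sum_indicator:
  assumes "finite A" "A \<inter> S \<noteq> {}"
  shows "1 \<le> (\<Sum>x\<in>A. indicator S x :: real)"
proof -
  obtain z where z: "z \<in> A" "z \<in> S"
    using assms(2) by blast
  have "indicator S z \<le> (\<Sum>x\<in>A. indicator S x :: real)"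
    using assms(1) z(1) by (intro member_le_sum) auto
  then show ?thesis
    using z(2) by simp
qed

lemma indicator_le_sum_indicator_diff:
  assumes "W \<inter> S \<in> red_edges (induced_edges E S)" "U \<in> E" "y \<in> U - W" "finite W"
  shows "indicator S y \<le> (\<Sum>x\<in>W - U. indicator S x :: real)"
proof (cases "y \<in> S")
  case True
  then have "(W - U) \<inter> S \<noteq> {}"
    using assms(1-3) trace_in_red_induced_edges_iff[of W S E] by blast
  then have "1 \<le> (\<Sum>x\<in>W - U. indicator S x :: real)"
    using assms(4) by (intro one_le_sum_indicator) auto
  with True show ?thesis
    by simp
qed (simp add: sum_nonneg)

lemma spread_weights_nonzero_imp_trace:
  "spread_weights E S F p R \<noteq> 0 \<Longrightarrow> R \<inter> S \<in> F"
  by (auto simp: spread_weights_def split: if_splits)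

lemma milp_feasible_spread_weights:
  assumes "hypergraph V E" "real (card E) \<le> L"
    and "frac_edge_packing S (red_edges (induced_edges E S)) p"
  shows "milp_feasible L V E (spread_weights E S (red_edges (induced_edges E S)) p) (indicator S)"
proof -
  define F where "F = red_edges (induced_edges E S)"
  define w where "w = spread_weights E S F p"
  have fin: "finite E" "finite F" "\<And>R. R \<in> E \<Longrightarrow> finite R"
    using assms(1) by (auto simp: hypergraph_def F_def finite_subset finite_red_edges finite_induced_edges)
  have F_edges: "f \<noteq> {} \<and> f \<subseteq> S" if "f \<in> F" for f
    using that red_induced_edges_nonempty_subset unfolding F_def by blast
  have "\<forall>f\<in>F. 0 \<le> p f \<and> p f \<le> 1"
    using frac_edge_packing_bounds[OF assms(3)[folded F_def] fin(2)] F_edges by (simp add: Int_absorb2)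
  then have w_bounds: "0 \<le> w R \<and> w R \<le> 1" if "R \<in> E" for R
    using spread_weights_bounds fin(1) that unfolding w_def by blast
  have w_trace: "R \<inter> S \<in> F" if "w R \<noteq> 0" for R
    using that spread_weights_nonzero_imp_trace unfolding w_def by blast
  have load_in_S: "(\<Sum>R\<in>{R\<in>E. x \<in> R}. w R) \<le> 1" if "x \<in> S" for x
    using spread_weights_load_le_one[OF fin(1,2) _ assms(3)[folded F_def] that]
    unfolding w_def F_def by (simp add: red_edges_subset)
  have load: "(\<Sum>R\<in>{R\<in>E. x \<in> R}. w R) \<le> real (card E)" for x
  proof -
    have "(\<Sum>R\<in>{R\<in>E. x \<in> R}. w R) \<le> real (card {R\<in>E. x \<in> R}) * 1"
      using w_bounds by (intro sum_bounded_above) auto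
    also have "\<dots> \<le> real (card E)"
      using fin(1) by (simp add: card_mono)
    finally show ?thesis .
  qed
  have indicator_sum_nonneg: "0 \<le> (\<Sum>x\<in>A. indicator S x :: real)" for A
    by (simp add: sum_nonneg)
  show ?thesis
    unfolding milp_feasible_def F_def[symmetric] w_def[symmetric]
  proof (intro conjI ballI)
    fix R assume R: "R \<in> E"
    show "0 \<le> w R" "w R \<le> 1"
      using w_bounds[OF R] by auto
    show "w R \<le> (\<Sum>x\<in>R. indicator S x)"
    proof (cases "w R = 0")
      case False
      then have "1 \<le> (\<Sum>x\<in>R. indicator S x :: real)"
        using one_le_sum_indicator[OF fin(3)[OF R]] w_trace F_edges by (simp add: Int_absorb2)
      then show ?thesis
        using w_bounds[OF R] by linarith
    qed (simp add: indicator_sum_nonneg)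
  next
    fix x
    show "indicator S x \<in> {0, 1::real}"
      by (simp add: indicator_def)
    show "(\<Sum>R\<in>{R\<in>E. x \<in> R}. w R) \<le> indicator S x + (1 - indicator S x) * L"
      using load_in_S[of x] load[of x] assms(2) by (cases "x \<in> S") auto
  next
    fix U W y assume U: "U \<in> E" and W: "W \<in> E" and y: "y \<in> U - W"
    show "w W \<le> 1 + (\<Sum>x\<in>W - U. indicator S x) - indicator S y"
    proof (cases "w W = 0")
      case True
      then show ?thesis
        using indicator_sum_nonneg[of "W - U"] by (simp add: indicator_def)
    next
      case False
      then have "indicator S y \<le> (\<Sum>x\<in>W - U. indicator S x :: real)"
        using indicator_le_sum_indicator_diff[OF _ U y fin(3)[OF W]] w_trace
        unfolding F_def by blast
      then show ?thesis
        using w_bounds[OF W] by linarith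
    qed
  qed
qed

theorem theoremA2:
  fixes V :: "'a set" and E :: "'a set set" and L :: real
  assumes "hypergraph V E"
    and "real (card E) \<le> L"
  shows "(\<exists>w t. milp_feasible L V E w t \<and> (\<Sum>R\<in>E. w R) = kappa V E)
       \<and> (\<forall>w t. milp_feasible L V E w t \<longrightarrow> (\<Sum>R\<in>E. w R) \<le> kappa V E)"
proof (intro conjI allI impI)
  have fin: "finite V" "finite E"
    using assms(1) by (auto simp: hypergraph_def finite_subset)
  obtain S where kappa: "kappa V E = tau_star S (red_edges (induced_edges E S))"
    using kappa_attained[OF fin(1)] .
  define F where "F = red_edges (induced_edges E S)"
  have F: "finite F" "F \<subseteq> induced_edges E S" "\<forall>f\<in>F. f \<inter> S \<noteq> {}"
    unfolding F_def using finite_red_edges[OF finite_induced_edges[OF fin(2)]] red_edges_subset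
      red_induced_edges_nonempty_subset by blast+
  obtain p where p: "frac_edge_packing S F p" and tau: "tau_star S F = (\<Sum>f\<in>F. p f)"
    using tau_star_attained[OF F(1,3)] .
  have "(\<Sum>R\<in>E. spread_weights E S F p R) = (\<Sum>f\<in>F. p f)"
    using sum_spread_weights[OF fin(2) F(1,2), where P = "\<lambda>_. True" and p = p] by simp
  then show "\<exists>w t. milp_feasible L V E w t \<and> (\<Sum>R\<in>E. w R) = kappa V E"
    using milp_feasible_spread_weights[OF assms p[unfolded F_def]] kappa tau
    unfolding F_def by metis
next
  show "(\<Sum>R\<in>E. w R) \<le> kappa V E" if "milp_feasible L V E w t" for w t
    using milp_value_le_kappa[OF assms(1) that] .
qed

end
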